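(* Let $\widehat{\mathbf Y}\in\mathbb R^{n\times n}$ be an optimal solution of the SDP, $\epsilon=\|\widehat{\mathbf Y}-\mathbf Y^*\|_1/\|\mathbf Y^*\|_1$, and let $B_1,\dots,B_{k'}$ be the sets output by Step 1 (described in the context) on input $\widehat{\mathbf Y},n,k$. Then there exist a partial matching $\pi'$ between $[k]$ and $[k']$ (an injective map from a subset of $[k]$ into $[k']$) and a universal constant $C>0$ such that \[ \Big|\bigcup_{a:\ \pi'(a)\text{ defined}} C^*_a\cap B_{\pi'(a)}\Big|\ge(1-C\epsilon)n. \]
   Context: Integers $n\ge4$, $k\ge2$, $k\mid n$; points $\mathbf h_1,\dots,\mathbf h_n\in\mathbb R^d$ with ground-truth labels $\sigma^*:[n]\to[k]$ and clusters $C^*_a=\{i:\sigma^*(i)=a\}$, each of size $n/k$. $Y^*_{ij}=\mathbb 1\{\sigma^*(i)=\sigma^*(j)\}$. SDP: $A_{ij}=\|\mathbf h_i-\mathbf h_j\|_2^2$; $\widehat{\mathbf Y}$ minimizes $\langle\mathbf Y,\mathbf A\rangle$ subject to $\mathbf Y\mathbf 1_n=\frac nk\mathbf 1_n$, $\mathbf Y\succeq0$, $\mathrm{diag}(\mathbf Y)=\mathbf 1_n$, $\mathbf Y\ge0$. $\|\cdot\|_1$ is the entrywise $\ell_1$ norm; $\widehat{\mathbf Y}_{u\bullet}$ denotes the $u$-th row. Step 1: set $V=[n]$, $B_0=\emptyset$, $t=0$; while $V\setminus\bigcup_{i\le t}B_i\ne\emptyset$: increase $t$ by one, let $V_t=V\setminus\bigcup_{i<t}B_i$,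 for each $u\in V_t$ let $B(u)=\{w\in V_t:\|\widehat{\mathbf Y}_{u\bullet}-\widehat{\mathbf Y}_{w\bullet}\|_1\le\frac{n}{4k}\}$, let $B_t$ be a set $B(u)$ of maximum cardinality over $u\in V_t$, and if $|B_t|>n/k$ remove arbitrary elements so that $|B_t|=n/k$. The output is $B_1,\dots,B_{k'}$ where $k'$ is the final value of $t$. *)

theory Defs
  imports Complex_Main
begin

text \<open>Points h_1..h_n in R^d are modelled as h :: nat => nat => real, indices i < n,
 coordinates l < d. Matrices are nat => nat => real with indices < n. Labels take
 values in {0..<k}.\<close>

definition sq_dist_matrix :: "nat \<Rightarrow> (nat \<Rightarrow> nat \<Rightarrow> real) \<Rightarrow> nat \<Rightarrow> nat \<Rightarrow> real" where
  "sq_dist_matrix d h i j = (\<Sum>l<d. (h i l - h j l)^2)"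

definition frob_inner :: "nat \<Rightarrow> (nat \<Rightarrow> nat \<Rightarrow> real) \<Rightarrow> (nat \<Rightarrow> nat \<Rightarrow> real) \<Rightarrow> real" where
  "frob_inner n Y A = (\<Sum>i<n. \<Sum>j<n. Y i j * A i j)"

definition entry_l1 :: "nat \<Rightarrow> (nat \<Rightarrow> nat \<Rightarrow> real) \<Rightarrow> real" where
  "entry_l1 n M = (\<Sum>i<n. \<Sum>j<n. \<bar>M i j\<bar>)"

definition psd :: "nat \<Rightarrow> (nat \<Rightarrow> nat \<Rightarrow> real) \<Rightarrow> bool" where
  "psd n Y \<longleftrightarrow> (\<forall>i<n. \<forall>j<n. Y i j = Y j i) \<and>
     (\<forall>x :: nat \<Rightarrow> real. (\<Sum>i<n. \<Sum>j<n. x i * Y i j * x j) \<ge> 0)"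

definition sdp_feasible :: "nat \<Rightarrow> nat \<Rightarrow> (nat \<Rightarrow> nat \<Rightarrow> real) \<Rightarrow> bool" where
  "sdp_feasible n k Y \<longleftrightarrow>
     (\<forall>i<n. (\<Sum>j<n. Y i j) = real n / real k) \<and>
     psd n Y \<and>
     (\<forall>i<n. Y i i = 1) \<and>
     (\<forall>i<n. \<forall>j<n. Y i j \<ge> 0)"

definition sdp_optimal :: "nat \<Rightarrow> nat \<Rightarrow> nat \<Rightarrow> (nat \<Rightarrow> nat \<Rightarrow> real) \<Rightarrow> (nat \<Rightarrow> nat \<Rightarrow> real) \<Rightarrow> bool" where
  "sdp_optimal n k d h Y \<longleftrightarrow> sdp_feasible n k Y \<and>
     (\<forall>Y'. sdp_feasible n k Y' \<longrightarrow>
        frob_inner n Y (sq_dist_matrix d h) \<le> frob_inner n Y' (sq_dist_matrix d h))"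

definition Ystar :: "(nat \<Rightarrow> nat) \<Rightarrow> nat \<Rightarrow> nat \<Rightarrow> real" where
  "Ystar \<sigma> i j = (if \<sigma> i = \<sigma> j then 1 else 0)"

definition cluster :: "nat \<Rightarrow> (nat \<Rightarrow> nat) \<Rightarrow> nat \<Rightarrow> nat set" where
  "cluster n \<sigma> a = {i. i < n \<and> \<sigma> i = a}"

definition nbhd :: "nat \<Rightarrow> nat \<Rightarrow> (nat \<Rightarrow> nat \<Rightarrow> real) \<Rightarrow> nat set \<Rightarrow> nat \<Rightarrow> nat set" where
  "nbhd n k Y V u = {w \<in> V. (\<Sum>j<n. \<bar>Y u j - Y w j\<bar>) \<le> real n / (4 * real k)}"

text \<open>Bs (0-indexed list, Bs!t = B_{t+1}) is a possible output of Step 1 for some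
 resolution of the arbitrary choices.\<close>
definition step1_output :: "nat \<Rightarrow> nat \<Rightarrow> (nat \<Rightarrow> nat \<Rightarrow> real) \<Rightarrow> nat set list \<Rightarrow> bool" where
  "step1_output n k Y Bs \<longleftrightarrow>
     (\<forall>t < length Bs.
        (let V = {0..<n} - \<Union>(set (take t Bs)) in
          V \<noteq> {} \<and>
          (\<exists>u\<in>V. (\<forall>v\<in>V. card (nbhd n k Y V v) \<le> card (nbhd n k Y V u)) \<and>
                  Bs ! t \<subseteq> nbhd n k Y V u \<and>
                  card (Bs ! t) = min (card (nbhd n k Y V u)) (n div k)))) \<and>
     {0..<n} - \<Union>(set Bs) = {}"

end

theory Submission
  imports Defs
begin

(* Let m = n/k be the cluster size and call row u of Y good if it lies within l1 distance m/8
   of row u of Ystar; since the total deviation is eps * n * m, at most 8 eps n rows are bad.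
   Good rows of one cluster are within m/4 of each other and good rows of different clusters
   are more than m/2 apart, so a block of Step 1, which has radius m/4 around its centre,
   meets the good rows of at most one cluster. Match each cluster to the first block meeting
   its good rows: those good rows form a competing neighbourhood of at most n/k points, so
   the block is at least as large, and it differs from the cluster only by bad rows. Hence
   at least n - 2 |bad| >= (1 - 16 eps) n points are recovered. *)

definition l1_dist :: "nat \<Rightarrow> (nat \<Rightarrow> real) \<Rightarrow> (nat \<Rightarrow> real) \<Rightarrow> real" where
  "l1_dist n x y = (\<Sum>j<n. \<bar>x j - y j\<bar>)"

lemma l1_dist_commute: "l1_dist n x y = l1_dist n y x"
  unfolding l1_dist_def by (simp add: abs_minus_commute)

lemma l1_dist_triangle: "l1_dist n x z \<le> l1_dist n x y + l1_dist n y z"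
  unfolding l1_dist_def sum.distrib[symmetric] by (intro sum_mono) linarith

lemma nbhd_eq: "nbhd n k Y V u = {w \<in> V. l1_dist n (Y u) (Y w) \<le> real n / (4 * real k)}"
  unfolding nbhd_def l1_dist_def ..

lemma cluster_eq_filter: "cluster n \<sigma> a = {j \<in> {..<n}. \<sigma> j = a}"
  unfolding cluster_def by auto

lemma sum_Ystar_row: "(\<Sum>j<n. Ystar \<sigma> i j) = real (card (cluster n \<sigma> (\<sigma> i)))"
  unfolding Ystar_def cluster_eq_filter by (simp add: sum.inter_filter[symmetric] eq_commute)

lemma entry_l1_Ystar:
  assumes "\<And>i. i < n \<Longrightarrow> card (cluster n \<sigma> (\<sigma> i)) = m"
  shows "entry_l1 n (Ystar \<sigma>) = real n * real m"
proof -
  have "entry_l1 n (Ystar \<sigma>) = (\<Sum>i<n. \<Sum>j<n. Ystar \<sigma> i j)"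
    unfolding entry_l1_def by (simp add: Ystar_def)
  also have "\<dots> = (\<Sum>i<n. real m)"
    by (intro sum.cong refl) (simp add: sum_Ystar_row assms)
  finally show ?thesis by simp
qed

lemma l1_dist_Ystar_rows_ge:
  assumes "\<sigma> u \<noteq> \<sigma> v"
  shows "real (card (cluster n \<sigma> (\<sigma> u))) \<le> l1_dist n (Ystar \<sigma> u) (Ystar \<sigma> v)"
proof -
  have "real (card (cluster n \<sigma> (\<sigma> u))) = (\<Sum>j\<in>cluster n \<sigma> (\<sigma> u). \<bar>Ystar \<sigma> u j - Ystar \<sigma> v j\<bar>)"
    using assms by (simp add: Ystar_def cluster_def)
  also have "\<dots> \<le> l1_dist n (Ystar \<sigma> u) (Ystar \<sigma> v)"
    unfolding l1_dist_def by (intro sum_mono2) (auto simp: cluster_def)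
  finally show ?thesis .
qed

definition good_rows :: "nat \<Rightarrow> (nat \<Rightarrow> nat) \<Rightarrow> (nat \<Rightarrow> nat \<Rightarrow> real) \<Rightarrow> real \<Rightarrow> nat set" where
  "good_rows n \<sigma> Y r = {u. u < n \<and> l1_dist n (Y u) (Ystar \<sigma> u) \<le> r}"

lemma good_rows_subset: "good_rows n \<sigma> Y r \<subseteq> {..<n}"
  unfolding good_rows_def by auto

lemma card_bad_rows_le:
  "real (card ({..<n} - good_rows n \<sigma> Y r)) * r \<le> entry_l1 n (\<lambda>i j. Y i j - Ystar \<sigma> i j)"
proof -
  define Bad where "Bad = {..<n} - good_rows n \<sigma> Y r"
  have "real (card Bad) * r = (\<Sum>u\<in>Bad. r)" by simp
  also have "\<dots> \<le> (\<Sum>u\<in>Bad. l1_dist n (Y u) (Ystar \<sigma> u))"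
    by (intro sum_mono) (auto simp: Bad_def good_rows_def)
  also have "\<dots> \<le> (\<Sum>u<n. l1_dist n (Y u) (Ystar \<sigma> u))"
    by (intro sum_mono2) (auto simp: Bad_def l1_dist_def)
  also have "\<dots> = entry_l1 n (\<lambda>i j. Y i j - Ystar \<sigma> i j)"
    unfolding entry_l1_def l1_dist_def ..
  finally show ?thesis unfolding Bad_def .
qed

lemma good_rows_same_cluster:
  assumes "u \<in> good_rows n \<sigma> Y r" "v \<in> good_rows n \<sigma> Y r" "\<sigma> u = \<sigma> v"
  shows "l1_dist n (Y u) (Y v) \<le> 2 * r"
proof -
  have "Ystar \<sigma> v = Ystar \<sigma> u"
    using assms(3) by (auto simp: Ystar_def)
  then have "l1_dist n (Y u) (Y v) \<le> l1_dist n (Y u) (Ystar \<sigma> u) + l1_dist n (Y v) (Ystar \<sigma> v)"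
    using l1_dist_triangle[of n "Y u" "Y v" "Ystar \<sigma> u"] l1_dist_commute[of n "Y v"] by simp
  then show ?thesis using assms(1,2) by (simp add: good_rows_def)
qed

lemma good_rows_other_cluster:
  assumes "u \<in> good_rows n \<sigma> Y r" "v \<in> good_rows n \<sigma> Y r" "\<sigma> u \<noteq> \<sigma> v"
  shows "real (card (cluster n \<sigma> (\<sigma> u))) - 2 * r \<le> l1_dist n (Y u) (Y v)"
proof -
  have "l1_dist n (Ystar \<sigma> u) (Ystar \<sigma> v)
      \<le> l1_dist n (Y u) (Ystar \<sigma> u) + l1_dist n (Y u) (Y v) + l1_dist n (Y v) (Ystar \<sigma> v)"
    using l1_dist_triangle[of n "Ystar \<sigma> u" "Ystar \<sigma> v" "Y u"]
      l1_dist_triangle[of n "Y u" "Ystar \<sigma> v" "Y v"] l1_dist_commute[of n "Y u" "Ystar \<sigma> u"]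
    by linarith
  then show ?thesis
    using l1_dist_Ystar_rows_ge[of \<sigma> u v n] assms by (simp add: good_rows_def)
qed

definition remaining :: "nat \<Rightarrow> nat set list \<Rightarrow> nat \<Rightarrow> nat set" where
  "remaining n Bs t = {0..<n} - \<Union>(set (take t Bs))"

lemma mem_remaining_iff:
  "x \<in> remaining n Bs t \<longleftrightarrow> x < n \<and> (\<forall>s<t. s < length Bs \<longrightarrow> x \<notin> Bs ! s)"
proof -
  have "set (take t Bs) = {Bs ! s |s. s < t \<and> s < length Bs}"
    by (force simp: in_set_conv_nth)
  then show ?thesis unfolding remaining_def by auto
qed

lemma step1_outputE:
  assumes "step1_output n k Y Bs" "t < length Bs"
  obtains u where "u \<in> remaining n Bs t"
    "\<And>v. v \<in> remaining n Bs t \<Longrightarrow>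
       card (nbhd n k Y (remaining n Bs t) v) \<le> card (nbhd n k Y (remaining n Bs t) u)"
    "Bs ! t \<subseteq> nbhd n k Y (remaining n Bs t) u"
    "card (Bs ! t) = min (card (nbhd n k Y (remaining n Bs t) u)) (n div k)"
  using assms unfolding step1_output_def remaining_def Let_def by blast

lemma step1_block_subset_remaining:
  assumes "step1_output n k Y Bs" "t < length Bs"
  shows "Bs ! t \<subseteq> remaining n Bs t"
  using assms by (elim step1_outputE) (auto simp: nbhd_def)

lemma step1_block_subset:
  assumes "step1_output n k Y Bs" "t < length Bs"
  shows "Bs ! t \<subseteq> {..<n}"
  using step1_block_subset_remaining[OF assms] by (auto simp: mem_remaining_iff)

lemma step1_blocks_disjoint:
  assumes "step1_output n k Y Bs" "s < length Bs" "t < length Bs" "s \<noteq> t"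
  shows "Bs ! s \<inter> Bs ! t = {}"
proof -
  have "Bs ! i \<inter> Bs ! j = {}" if "i < j" "j < length Bs" for i j
    using step1_block_subset_remaining[OF assms(1) that(2)] that by (auto simp: mem_remaining_iff)
  then show ?thesis
    using assms(2-4) by (metis Int_commute linorder_neqE_nat)
qed

lemma step1_blocks_cover:
  assumes "step1_output n k Y Bs"
  shows "{..<n} \<subseteq> \<Union>(set Bs)"
  using assms unfolding step1_output_def by auto

lemma step1_block_radius:
  assumes "step1_output n k Y Bs" "t < length Bs"
  obtains c where "\<And>x. x \<in> Bs ! t \<Longrightarrow> l1_dist n (Y c) (Y x) \<le> real n / (4 * real k)"
  using assms by (elim step1_outputE) (auto simp: nbhd_eq)

lemma step1_first_block_card_ge:
  assumes step: "step1_output n k Y Bs" and t: "t < length Bs"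
    and hit: "Bs ! t \<inter> G \<noteq> {}" and untouched: "\<And>s. s < t \<Longrightarrow> Bs ! s \<inter> G = {}"
    and "G \<subseteq> {..<n}"
    and diam: "\<And>u v. u \<in> G \<Longrightarrow> v \<in> G \<Longrightarrow> l1_dist n (Y u) (Y v) \<le> real n / (4 * real k)"
    and "card G \<le> n div k"
  shows "card G \<le> card (Bs ! t)"
proof -
  let ?V = "remaining n Bs t"
  obtain w where w: "w \<in> Bs ! t" "w \<in> G" using hit by blast
  have G_remaining: "G \<subseteq> ?V"
    using \<open>G \<subseteq> {..<n}\<close> untouched by (fastforce simp: mem_remaining_iff)
  obtain u where u: "\<And>v. v \<in> ?V \<Longrightarrow> card (nbhd n k Y ?V v) \<le> card (nbhd n k Y ?V u)"
    "card (Bs ! t) = min (card (nbhd n k Y ?V u)) (n div k)"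
    using step1_outputE[OF step t] by metis
  have "G \<subseteq> nbhd n k Y ?V w"
    using G_remaining diam w(2) by (auto simp: nbhd_eq)
  then have "card G \<le> card (nbhd n k Y ?V w)"
    by (intro card_mono) (auto simp: nbhd_def remaining_def)
  also have "\<dots> \<le> card (nbhd n k Y ?V u)"
    using u(1) G_remaining w(2) by blast
  finally show ?thesis
    using u(2) \<open>card G \<le> n div k\<close> by linarith
qed

lemma step1_block_good_rows_one_cluster:
  assumes step: "step1_output n k Y Bs" and "t < length Bs"
    and x: "x \<in> Bs ! t \<inter> good_rows n \<sigma> Y r" and y: "y \<in> Bs ! t \<inter> good_rows n \<sigma> Y r"
    and separated: "2 * (real n / (4 * real k)) < real (card (cluster n \<sigma> (\<sigma> x))) - 2 * r"
  shows "\<sigma> x = \<sigma> y"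
proof (rule ccontr)
  assume "\<sigma> x \<noteq> \<sigma> y"
  obtain c where c: "\<And>z. z \<in> Bs ! t \<Longrightarrow> l1_dist n (Y c) (Y z) \<le> real n / (4 * real k)"
    using step1_block_radius[OF step \<open>t < length Bs\<close>] by metis
  have "l1_dist n (Y x) (Y y) \<le> 2 * (real n / (4 * real k))"
    using l1_dist_triangle[of n "Y x" "Y y" "Y c"] l1_dist_commute[of n "Y x" "Y c"]
      c[of x] c[of y] x y by auto
  moreover have "real (card (cluster n \<sigma> (\<sigma> x))) - 2 * r \<le> l1_dist n (Y x) (Y y)"
    using good_rows_other_cluster \<open>\<sigma> x \<noteq> \<sigma> y\<close> x y by blast
  ultimately show False using separated by linarith
qed

lemma step1_first_block_good_cluster_card_ge:
  assumes step: "step1_output n k Y Bs" and "t < length Bs"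
    and "Bs ! t \<inter> {x \<in> good_rows n \<sigma> Y r. \<sigma> x = a} \<noteq> {}"
    and "\<And>s. s < t \<Longrightarrow> Bs ! s \<inter> {x \<in> good_rows n \<sigma> Y r. \<sigma> x = a} = {}"
    and "2 * r \<le> real n / (4 * real k)" and "card (cluster n \<sigma> a) \<le> n div k"
  shows "card {x \<in> good_rows n \<sigma> Y r. \<sigma> x = a} \<le> card (Bs ! t)"
proof (rule step1_first_block_card_ge[OF assms(1-4)])
  show "{x \<in> good_rows n \<sigma> Y r. \<sigma> x = a} \<subseteq> {..<n}"
    using good_rows_subset by blast
  show "l1_dist n (Y u) (Y v) \<le> real n / (4 * real k)"
    if "u \<in> {x \<in> good_rows n \<sigma> Y r. \<sigma> x = a}" "v \<in> {x \<in> good_rows n \<sigma> Y r. \<sigma> x = a}" for u v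
    using good_rows_same_cluster[of u n \<sigma> Y r v] that \<open>2 * r \<le> real n / (4 * real k)\<close> by simp
  have "card {x \<in> good_rows n \<sigma> Y r. \<sigma> x = a} \<le> card (cluster n \<sigma> a)"
    by (intro card_mono) (auto simp: cluster_def good_rows_def)
  then show "card {x \<in> good_rows n \<sigma> Y r. \<sigma> x = a} \<le> n div k"
    using \<open>card (cluster n \<sigma> a) \<le> n div k\<close> by linarith
qed

lemma first_block_meeting:
  assumes "G \<subseteq> \<Union>(set Bs)" "G \<noteq> {}"
  obtains t where "t < length Bs" "Bs ! t \<inter> G \<noteq> {}" "\<And>s. s < t \<Longrightarrow> Bs ! s \<inter> G = {}"
proof -
  have "\<exists>t. t < length Bs \<and> Bs ! t \<inter> G \<noteq> {}"
    using assms by (force simp: in_set_conv_nth)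
  then obtain t where "t < length Bs \<and> Bs ! t \<inter> G \<noteq> {}"
    and "\<forall>s<t. \<not> (s < length Bs \<and> Bs ! s \<inter> G \<noteq> {})"
    by (subst (asm) exists_least_iff) blast
  then show ?thesis using that by (meson order.strict_trans)
qed

lemma card_good_le_matched_plus_bad:
  fixes Bs :: "'a set list" and \<sigma> :: "'a \<Rightarrow> 'b" and p :: "'b \<Rightarrow> nat"
  assumes "finite U" and "Good \<subseteq> U" and blocks: "\<And>t. t < length Bs \<Longrightarrow> Bs ! t \<subseteq> U"
    and disjoint: "\<And>s t. s < length Bs \<Longrightarrow> t < length Bs \<Longrightarrow> s \<noteq> t \<Longrightarrow> Bs ! s \<inter> Bs ! t = {}"
    and p: "\<And>a. a \<in> \<sigma> ` Good \<Longrightarrow> p a < length Bs" and p_inj: "inj_on p (\<sigma> ` Good)"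
    and pure: "\<And>a x. a \<in> \<sigma> ` Good \<Longrightarrow> x \<in> Bs ! p a \<inter> Good \<Longrightarrow> \<sigma> x = a"
    and large: "\<And>a. a \<in> \<sigma> ` Good \<Longrightarrow> card {x \<in> Good. \<sigma> x = a} \<le> card (Bs ! p a)"
  shows "card Good \<le> card (\<Union>a\<in>\<sigma> ` Good. {x \<in> Bs ! p a. \<sigma> x = a}) + card (U - Good)"
proof -
  define D where "D = \<sigma> ` Good"
  define M where "M a = {x \<in> Bs ! p a. \<sigma> x = a}" for a
  have fin: "finite Good" "finite D"
    using \<open>finite U\<close> \<open>Good \<subseteq> U\<close> by (auto simp: D_def intro: finite_subset)
  have fin_block: "finite (Bs ! p a)" if "a \<in> D" for a
    using finite_subset[OF blocks[OF p[OF that[unfolded D_def]]] \<open>finite U\<close>] .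
  have local: "card {x \<in> Good. \<sigma> x = a} \<le> card (M a) + card (Bs ! p a - Good)" if a: "a \<in> D" for a
  proof -
    have "Bs ! p a \<subseteq> M a \<union> (Bs ! p a - Good)"
      using pure[of a x for x] a unfolding D_def M_def by blast
    then have "card (Bs ! p a) \<le> card (M a \<union> (Bs ! p a - Good))"
      using fin_block[OF a] by (intro card_mono) (auto simp: M_def)
    also have "\<dots> \<le> card (M a) + card (Bs ! p a - Good)"
      by (rule card_Un_le)
    finally show ?thesis using large[of a] a by (simp add: D_def)
  qed
  have "card Good = card (\<Union>a\<in>D. {x \<in> Good. \<sigma> x = a})"
    by (rule arg_cong[of _ _ card]) (auto simp: D_def)
  also have "\<dots> = (\<Sum>a\<in>D. card {x \<in> Good. \<sigma> x = a})"
    by (rule card_UN_disjoint) (use fin in auto)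
  also have "\<dots> \<le> (\<Sum>a\<in>D. card (M a)) + (\<Sum>a\<in>D. card (Bs ! p a - Good))"
    unfolding sum.distrib[symmetric] using local by (rule sum_mono)
  also have "(\<Sum>a\<in>D. card (M a)) = card (\<Union>a\<in>D. M a)"
    using fin fin_block by (subst card_UN_disjoint) (auto simp: M_def)
  also have "(\<Sum>a\<in>D. card (Bs ! p a - Good)) = card (\<Union>a\<in>D. Bs ! p a - Good)"
  proof (rule card_UN_disjoint[symmetric])
    show "\<forall>a\<in>D. \<forall>b\<in>D. a \<noteq> b \<longrightarrow> (Bs ! p a - Good) \<inter> (Bs ! p b - Good) = {}"
    proof (intro ballI impI)
      fix a b assume "a \<in> D" "b \<in> D" "a \<noteq> b"
      then have "p a \<noteq> p b" using p_inj by (auto simp: D_def dest: inj_onD)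
      then show "(Bs ! p a - Good) \<inter> (Bs ! p b - Good) = {}"
        using disjoint p \<open>a \<in> D\<close> \<open>b \<in> D\<close> by (auto simp: D_def)
    qed
  qed (use fin fin_block in auto)
  also have "\<dots> \<le> card (U - Good)"
    using blocks p \<open>finite U\<close> by (intro card_mono) (auto simp: D_def)
  finally show ?thesis by (simp add: D_def M_def)
qed

lemma partial_matching_of_blocks:
  fixes Bs :: "'a set list" and \<sigma> :: "'a \<Rightarrow> 'b" and U Good :: "'a set"
  assumes "finite U" and "Good \<subseteq> U" and cover: "U \<subseteq> \<Union>(set Bs)"
    and blocks: "\<And>t. t < length Bs \<Longrightarrow> Bs ! t \<subseteq> U"
    and disjoint: "\<And>s t. s < length Bs \<Longrightarrow> t < length Bs \<Longrightarrow> s \<noteq> t \<Longrightarrow> Bs ! s \<inter> Bs ! t = {}"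
    and homogeneous:
      "\<And>t x y. t < length Bs \<Longrightarrow> x \<in> Bs ! t \<inter> Good \<Longrightarrow> y \<in> Bs ! t \<inter> Good \<Longrightarrow> \<sigma> x = \<sigma> y"
    and first_hit: "\<And>a t. t < length Bs \<Longrightarrow> Bs ! t \<inter> {x \<in> Good. \<sigma> x = a} \<noteq> {} \<Longrightarrow>
      (\<And>s. s < t \<Longrightarrow> Bs ! s \<inter> {x \<in> Good. \<sigma> x = a} = {}) \<Longrightarrow>
      card {x \<in> Good. \<sigma> x = a} \<le> card (Bs ! t)"
  shows "\<exists>\<pi>. dom \<pi> = \<sigma> ` Good \<and> ran \<pi> \<subseteq> {0..<length Bs} \<and> inj_on \<pi> (dom \<pi>) \<and>
    card Good \<le> card (\<Union>a\<in>dom \<pi>. {x \<in> Bs ! the (\<pi> a). \<sigma> x = a}) + card (U - Good)"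
proof -
  define G where "G a = {x \<in> Good. \<sigma> x = a}" for a
  define D where "D = \<sigma> ` Good"
  have "\<exists>t. t < length Bs \<and> Bs ! t \<inter> G a \<noteq> {} \<and> (\<forall>s<t. Bs ! s \<inter> G a = {})" if a: "a \<in> D" for a
  proof -
    have "G a \<subseteq> \<Union>(set Bs)" "G a \<noteq> {}"
      using a cover \<open>Good \<subseteq> U\<close> by (auto simp: D_def G_def)
    then obtain t where "t < length Bs" "Bs ! t \<inter> G a \<noteq> {}" "\<And>s. s < t \<Longrightarrow> Bs ! s \<inter> G a = {}"
      by (rule first_block_meeting) blast
    then show ?thesis by auto
  qed
  then obtain p where p: "\<And>a. a \<in> D \<Longrightarrow>
      p a < length Bs \<and> Bs ! p a \<inter> G a \<noteq> {} \<and> (\<forall>s<p a. Bs ! s \<inter> G a = {})"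
    by metis
  have pure: "\<sigma> x = a" if "a \<in> D" "x \<in> Bs ! p a \<inter> Good" for a x
  proof -
    obtain w where "w \<in> Bs ! p a \<inter> G a" using p[OF \<open>a \<in> D\<close>] by blast
    then show ?thesis using homogeneous[of "p a" x w] p[OF \<open>a \<in> D\<close>] that by (auto simp: G_def)
  qed
  have p_inj: "inj_on p D"
  proof (rule inj_onI)
    fix a b assume "a \<in> D" "b \<in> D" "p a = p b"
    then obtain y where "y \<in> Bs ! p a \<inter> G b" using p by (metis all_not_in_conv)
    then show "a = b" using pure[OF \<open>a \<in> D\<close>, of y] by (auto simp: G_def)
  qed
  define \<pi> where "\<pi> a = (if a \<in> D then Some (p a) else None)" for a
  have dom_\<pi>: "dom \<pi> = D" by (auto simp: \<pi>_def dom_def)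
  have "card Good \<le> card (\<Union>a\<in>D. {x \<in> Bs ! p a. \<sigma> x = a}) + card (U - Good)"
    unfolding D_def
  proof (rule card_good_le_matched_plus_bad[OF \<open>finite U\<close> \<open>Good \<subseteq> U\<close> blocks disjoint])
    show "inj_on p (\<sigma> ` Good)" using p_inj by (simp add: D_def)
  next
    fix a assume "a \<in> \<sigma> ` Good"
    then have a: "a \<in> D" by (simp add: D_def)
    show "p a < length Bs" using p[OF a] by blast
    show "card {x \<in> Good. \<sigma> x = a} \<le> card (Bs ! p a)"
      using p[OF a] by (intro first_hit) (auto simp: G_def)
    show "\<sigma> x = a" if "x \<in> Bs ! p a \<inter> Good" for x using pure[OF a that] .
  qed
  moreover have "(\<Union>a\<in>dom \<pi>. {x \<in> Bs ! the (\<pi> a). \<sigma> x = a}) = (\<Union>a\<in>D. {x \<in> Bs ! p a. \<sigma> x = a})"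
    by (auto simp: dom_\<pi> \<pi>_def)
  moreover have "ran \<pi> \<subseteq> {0..<length Bs}" using p by (auto simp: \<pi>_def ran_def)
  moreover have "inj_on \<pi> (dom \<pi>)" using p_inj by (auto simp: dom_\<pi> \<pi>_def inj_on_def)
  ultimately show ?thesis using dom_\<pi> unfolding D_def by (intro exI[of _ \<pi>]) simp
qed

lemma step1_recovers_clusters:
  fixes n k :: nat and \<sigma> :: "nat \<Rightarrow> nat" and Y :: "nat \<Rightarrow> nat \<Rightarrow> real" and Bs :: "nat set list"
  assumes "0 < n" "0 < k" "k dvd n" and labels: "\<forall>i<n. \<sigma> i < k"
    and sizes: "\<forall>a<k. card (cluster n \<sigma> a) = n div k" and step: "step1_output n k Y Bs"
  shows "\<exists>\<pi>::nat \<Rightarrow> nat option.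
    dom \<pi> \<subseteq> {0..<k} \<and> ran \<pi> \<subseteq> {0..<length Bs} \<and> inj_on \<pi> (dom \<pi>) \<and>
    real (card (\<Union>a\<in>dom \<pi>. cluster n \<sigma> a \<inter> Bs ! the (\<pi> a)))
      \<ge> (1 - 16 * (entry_l1 n (\<lambda>i j. Y i j - Ystar \<sigma> i j) / entry_l1 n (Ystar \<sigma>))) * real n"
proof -
  define m where "m = n div k"
  have m_pos: "0 < m"
    using assms(1-3) by (simp add: m_def div_greater_zero_iff dvd_imp_le)
  have n_eq: "real n = real m * real k"
    using \<open>k dvd n\<close> by (simp add: m_def flip: of_nat_mult)
  have radius: "real n / (4 * real k) = real m / 4"
    using n_eq \<open>0 < k\<close> by simp
  have cluster_size: "\<And>u. u < n \<Longrightarrow> card (cluster n \<sigma> (\<sigma> u)) = m"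
    using labels sizes by (simp add: m_def)
  define Good where "Good = good_rows n \<sigma> Y (real m / 8)"
  define S where "S = entry_l1 n (\<lambda>i j. Y i j - Ystar \<sigma> i j)"
  have homogeneous: "\<sigma> x = \<sigma> y"
    if "t < length Bs" "x \<in> Bs ! t \<inter> Good" "y \<in> Bs ! t \<inter> Good" for t x y
  proof (rule step1_block_good_rows_one_cluster[OF step that[unfolded Good_def]])
    show "2 * (real n / (4 * real k)) < real (card (cluster n \<sigma> (\<sigma> x))) - 2 * (real m / 8)"
      using that cluster_size[of x] radius m_pos by (simp add: Good_def good_rows_def)
  qed
  have first_hit: "card {x \<in> Good. \<sigma> x = a} \<le> card (Bs ! t)"
    if hit: "t < length Bs" "Bs ! t \<inter> {x \<in> Good. \<sigma> x = a} \<noteq> {}"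
      "\<And>s. s < t \<Longrightarrow> Bs ! s \<inter> {x \<in> Good. \<sigma> x = a} = {}" for a t
    unfolding Good_def
  proof (rule step1_first_block_good_cluster_card_ge[OF step hit[unfolded Good_def]])
    show "2 * (real m / 8) \<le> real n / (4 * real k)" using radius by simp
    obtain w where "w \<in> Good" "\<sigma> w = a" using hit(2) by blast
    then show "card (cluster n \<sigma> a) \<le> n div k"
      using cluster_size[of w] by (simp add: Good_def good_rows_def m_def)
  qed
  obtain \<pi> where \<pi>: "dom \<pi> = \<sigma> ` Good" "ran \<pi> \<subseteq> {0..<length Bs}" "inj_on \<pi> (dom \<pi>)"
    and count: "card Good \<le> card (\<Union>a\<in>dom \<pi>. {x \<in> Bs ! the (\<pi> a). \<sigma> x = a}) + card ({..<n} - Good)"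
    using partial_matching_of_blocks[of "{..<n}" Good Bs \<sigma>] homogeneous first_hit
      good_rows_subset step1_blocks_cover[OF step] step1_block_subset[OF step]
      step1_blocks_disjoint[OF step] unfolding Good_def by blast
  have matched: "(\<Union>a\<in>dom \<pi>. {x \<in> Bs ! the (\<pi> a). \<sigma> x = a}) = (\<Union>a\<in>dom \<pi>. cluster n \<sigma> a \<inter> Bs ! the (\<pi> a))"
    using \<pi>(2) step1_block_subset[OF step] by (fastforce simp: cluster_def ran_def)
  have "dom \<pi> \<subseteq> {0..<k}"
    using \<pi>(1) labels good_rows_subset by (force simp: Good_def)
  have bad: "real (card ({..<n} - Good)) \<le> S / (real m / 8)"
    using card_bad_rows_le[of n \<sigma> Y "real m / 8"] m_pos by (simp add: Good_def S_def field_simps)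
  have "Good \<subseteq> {..<n}" by (simp add: Good_def good_rows_subset)
  then have "card Good + card ({..<n} - Good) = n"
    using card_Diff_subset[of Good "{..<n}"] card_mono[of "{..<n}" Good] finite_subset by fastforce
  then have "real n - 2 * real (card ({..<n} - Good))
      \<le> real (card (\<Union>a\<in>dom \<pi>. cluster n \<sigma> a \<inter> Bs ! the (\<pi> a)))"
    using count[unfolded matched] by linarith
  moreover have "(1 - 16 * (S / entry_l1 n (Ystar \<sigma>))) * real n = real n - 2 * (S / (real m / 8))"
    using entry_l1_Ystar[OF cluster_size] m_pos \<open>0 < n\<close> by (simp add: field_simps)
  ultimately show ?thesis
    using \<pi> \<open>dom \<pi> \<subseteq> {0..<k}\<close> bad unfolding S_def by (intro exI[of _ \<pi>]) linarith
qed

theorem lemma12: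
  shows "\<exists>C::real > 0. \<forall>(n::nat) (k::nat) (d::nat) (h::nat \<Rightarrow> nat \<Rightarrow> real)
      (\<sigma>::nat \<Rightarrow> nat) (Y::nat \<Rightarrow> nat \<Rightarrow> real) (Bs::nat set list).
      n \<ge> 4 \<and> k \<ge> 2 \<and> k dvd n \<and>
      (\<forall>i<n. \<sigma> i < k) \<and> (\<forall>a<k. card (cluster n \<sigma> a) = n div k) \<and>
      sdp_optimal n k d h Y \<and> step1_output n k Y Bs \<longrightarrow>
      (\<exists>\<pi>::nat \<Rightarrow> nat option.
         dom \<pi> \<subseteq> {0..<k} \<and> ran \<pi> \<subseteq> {0..<length Bs} \<and> inj_on \<pi> (dom \<pi>) \<and>
         real (card (\<Union>a\<in>dom \<pi>. cluster n \<sigma> a \<inter> Bs ! the (\<pi> a)))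
           \<ge> (1 - C * (entry_l1 n (\<lambda>i j. Y i j - Ystar \<sigma> i j) / entry_l1 n (Ystar \<sigma>))) * real n)"
proof (intro exI[of _ 16] conjI allI impI, goal_cases)
  case 1
  show ?case by simp
next
  case (2 n k d h \<sigma> Y Bs)
  then show ?case by (intro step1_recovers_clusters) auto
qed

end
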